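(* For every integer $g\ge 3$, the order of a $[1,2;g]$-mixed cage is $\frac{g^2+1}{2}$ if $g$ is odd and $\frac{g^2}{2}$ if $g$ is even.
   Context: A mixed graph is a finite simple graph that may contain both edges and arcs. A $[z,r;g]$-mixed graph is a mixed graph in which every vertex is the tail of exactly $z$ arcs, the head of exactly $z$ arcs, and is incident with exactly $r$ edges, and whose girth is $g$. Walks traverse edges in either direction and arcs only in their direction; a cycle is a closed walk with no repeated vertices (other than start = end) and no repeated edge or arc; the girth is the length of a shortest cycle. A $[z,r;g]$-mixed cage is a $[z,r;g]$-mixed graph of minimum order. *)

theory Defs
  imports Main
begin

definition mixed_graph :: "'a set \<Rightarrow> ('a \<Rightarrow> 'a \<Rightarrow> bool) \<Rightarrow> ('a \<Rightarrow> 'a \<Rightarrow> bool) \<Rightarrow> bool" where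
  "mixed_graph V E A \<longleftrightarrow>
     finite V \<and>
     (\<forall>u v. E u v \<longrightarrow> u \<in> V \<and> v \<in> V) \<and>
     (\<forall>u v. A u v \<longrightarrow> u \<in> V \<and> v \<in> V) \<and>
     (\<forall>u v. E u v \<longrightarrow> E v u) \<and>
     (\<forall>u. \<not> E u u) \<and> (\<forall>u. \<not> A u u) \<and>
     (\<forall>u v. \<not> (E u v \<and> A u v)) \<and>
     (\<forall>u v. \<not> (A u v \<and> A v u))"

definition mstep :: "('a \<Rightarrow> 'a \<Rightarrow> bool) \<Rightarrow> ('a \<Rightarrow> 'a \<Rightarrow> bool) \<Rightarrow> 'a \<Rightarrow> 'a \<Rightarrow> bool" where
  "mstep E A u v \<longleftrightarrow> E u v \<or> A u v"

(* the edge or arc used by a step u -> v (unambiguous in a simple mixed graph) *)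
definition mobj :: "('a \<Rightarrow> 'a \<Rightarrow> bool) \<Rightarrow> 'a \<Rightarrow> 'a \<Rightarrow> 'a set + ('a \<times> 'a)" where
  "mobj E u v = (if E u v then Inl {u, v} else Inr (u, v))"

definition mixed_cycle :: "('a \<Rightarrow> 'a \<Rightarrow> bool) \<Rightarrow> ('a \<Rightarrow> 'a \<Rightarrow> bool) \<Rightarrow> 'a list \<Rightarrow> bool" where
  "mixed_cycle E A vs \<longleftrightarrow>
     vs \<noteq> [] \<and> distinct vs \<and>
     (\<forall>i < length vs. mstep E A (vs ! i) (vs ! ((i + 1) mod length vs))) \<and>
     distinct (map (\<lambda>i. mobj E (vs ! i) (vs ! ((i + 1) mod length vs))) [0..<length vs])"

definition has_girth :: "('a \<Rightarrow> 'a \<Rightarrow> bool) \<Rightarrow> ('a \<Rightarrow> 'a \<Rightarrow> bool) \<Rightarrow> nat \<Rightarrow> bool" where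
  "has_girth E A g \<longleftrightarrow>
     (\<exists>vs. mixed_cycle E A vs \<and> length vs = g) \<and>
     (\<forall>vs. mixed_cycle E A vs \<longrightarrow> g \<le> length vs)"

definition zrg_mixed_graph :: "'a set \<Rightarrow> ('a \<Rightarrow> 'a \<Rightarrow> bool) \<Rightarrow> ('a \<Rightarrow> 'a \<Rightarrow> bool) \<Rightarrow> nat \<Rightarrow> nat \<Rightarrow> nat \<Rightarrow> bool" where
  "zrg_mixed_graph V E A z r g \<longleftrightarrow>
     mixed_graph V E A \<and>
     (\<forall>v\<in>V. card {w\<in>V. A v w} = z \<and> card {w\<in>V. A w v} = z \<and> card {w\<in>V. E v w} = r) \<and>
     has_girth E A g"

end

theory Submission
  imports Defs
begin

(*
  In a [1,2;g]-mixed graph the arcs define a permutation s of the vertices, and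
  following edges without backtracking from an edge x y gives a walk p 0 = x, p 1 = y, p 2, ...
  If s^j1 (p i1) = s^j2 (p i2) for distinct (i1, j1), (i2, j2) with |i1 - i2| + |j1 - j2| < g,
  then j1 - j2 arcs followed by |i1 - i2| edges back form a closed walk through an arc (or, if
  j1 = j2, the edge walk repeats a vertex early), and either way there is a cycle shorter than g.
  So (i, j) |-> s^j (p i) is injective on every set of lattice points of L1-diameter less than g,
  and such a set with (g^2 + 1) div 2 points exists.

  Take the circulant on Z/nZ with edges x ~ x +- 1 and arcs x -> x + m, where
  (n, m) = (2k^2 + 2k + 1, 2k + 1) for g = 2k + 1 and (n, m) = (2k^2, 2k - 1) for g = 2k.
  A cycle of length L < g yields a relation a + b m = 0 (mod n) with b >= 0 arcs and
  |a| + b <= L, which must be trivial; so the cycle uses edges only and is the whole n-cycle.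
  k arcs followed by g - k edges close a cycle of length g.
*)

section \<open>Walks and cycles in mixed graphs\<close>

lemma mod_Suc_Suc_neq:
  fixes i L :: nat
  assumes "i < L" "3 \<le> L"
  shows "((i + 1) mod L + 1) mod L \<noteq> i"
proof -
  have "((i + 1) mod L + 1) mod L = (i + 2) mod L" by (simp add: mod_Suc_eq)
  also have "\<dots> \<noteq> i" using assms by (cases "i + 2 < L") (auto simp: mod_if)
  finally show ?thesis .
qed

lemma mod_pred_Suc:
  fixes i L :: nat
  assumes "i < L"
  shows "((i + (L - 1)) mod L + 1) mod L = i"
proof -
  have "((i + (L - 1)) mod L + 1) mod L = (i + L) mod L"
    using assms by (simp add: mod_Suc_eq)
  then show ?thesis using assms by simp
qed

lemma mixed_graph_edge_sym: "mixed_graph V E A \<Longrightarrow> E u v \<Longrightarrow> E v u"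
  unfolding mixed_graph_def by blast

lemma mixed_graph_edge_not_arc: "mixed_graph V E A \<Longrightarrow> E u v \<Longrightarrow> \<not> A u v"
  unfolding mixed_graph_def by blast

lemma mixed_graph_mstep_vertices: "mixed_graph V E A \<Longrightarrow> mstep E A u v \<Longrightarrow> u \<in> V \<and> v \<in> V"
  unfolding mixed_graph_def mstep_def by blast

lemma mixed_graph_mstep_irrefl: "mixed_graph V E A \<Longrightarrow> \<not> mstep E A u u"
  unfolding mixed_graph_def mstep_def by blast

lemma mixed_graph_mstep_back_edge:
  "mixed_graph V E A \<Longrightarrow> mstep E A u v \<Longrightarrow> mstep E A v u \<Longrightarrow> E u v"
  unfolding mixed_graph_def mstep_def by blast

lemma mobj_eq_cases: "mobj E a b = mobj E c d \<Longrightarrow> a = c \<or> a = d \<and> b = c"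
  unfolding mobj_def by (auto split: if_splits simp: doubleton_eq_iff)

lemma mixed_cycle_length_ge_3:
  assumes mg: "mixed_graph V E A" and cyc: "mixed_cycle E A vs"
  shows "3 \<le> length vs"
proof -
  have steps: "\<And>i. i < length vs \<Longrightarrow> mstep E A (vs ! i) (vs ! ((i + 1) mod length vs))"
    and objs: "distinct (map (\<lambda>i. mobj E (vs ! i) (vs ! ((i + 1) mod length vs))) [0..<length vs])"
    using cyc unfolding mixed_cycle_def by blast+
  have "length vs \<noteq> 1"
  proof
    assume "length vs = 1"
    then have "mstep E A (vs ! 0) (vs ! 0)" using steps[of 0] by simp
    then show False using mixed_graph_mstep_irrefl[OF mg] by blast
  qed
  moreover have "length vs \<noteq> 2"
  proof
    assume two: "length vs = 2"
    then have "E (vs ! 0) (vs ! 1)" "E (vs ! 1) (vs ! 0)"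
      using steps[of 0] steps[of 1] mixed_graph_mstep_back_edge[OF mg] by auto
    moreover have "mobj E (vs ! 0) (vs ! 1) \<noteq> mobj E (vs ! 1) (vs ! 0)"
      using objs two by (simp add: upt_rec)
    ultimately show False by (simp add: mobj_def insert_commute)
  qed
  moreover have "length vs \<noteq> 0" using cyc unfolding mixed_cycle_def by simp
  ultimately show ?thesis by linarith
qed

definition mixed_walk ::
    "('a \<Rightarrow> 'a \<Rightarrow> bool) \<Rightarrow> ('a \<Rightarrow> 'a \<Rightarrow> bool) \<Rightarrow> (nat \<Rightarrow> 'a) \<Rightarrow> nat \<Rightarrow> bool" where
  "mixed_walk E A w L \<longleftrightarrow> (\<forall>i<L. mstep E A (w i) (w (Suc i)))"

lemma mixed_walk_segment:
  assumes "mixed_walk E A w L" "a \<le> b" "b \<le> L"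
  shows "mixed_walk E A (\<lambda>i. w (a + i)) (b - a)"
  using assms unfolding mixed_walk_def by simp

lemma mixed_walk_append:
  assumes "mixed_walk E A w1 L1" "mixed_walk E A w2 L2" "w1 L1 = w2 0"
  shows "mixed_walk E A (\<lambda>t. if t \<le> L1 then w1 t else w2 (t - L1)) (L1 + L2)"
  unfolding mixed_walk_def
proof (intro allI impI)
  fix t assume "t < L1 + L2"
  then consider "t < L1" | "t = L1" "0 < L2" | "L1 < t" "t - L1 < L2" by linarith
  then show "mstep E A (if t \<le> L1 then w1 t else w2 (t - L1))
                       (if Suc t \<le> L1 then w1 (Suc t) else w2 (Suc t - L1))"
    using assms unfolding mixed_walk_def by cases (auto simp: Suc_diff_le)
qed

lemma injective_closed_walk_is_cycle:
  assumes walk: "mixed_walk E A w L" and closed: "w L = w 0"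
    and inj: "inj_on w {..<L}" and L3: "3 \<le> L"
  shows "mixed_cycle E A (map w [0..<L])"
proof -
  have wrap: "w (Suc i) = w ((i + 1) mod L)" if "i < L" for i
    using that closed by (cases "Suc i = L") auto
  have succ: "map w [0..<L] ! ((i + 1) mod L) = w (Suc i)" if "i < L" for i
    using wrap[OF that] L3 by simp
  have objs_inj: "inj_on (\<lambda>i. mobj E (w i) (w (Suc i))) {0..<L}"
  proof (rule inj_onI)
    fix i j assume i: "i \<in> {0..<L}" and j: "j \<in> {0..<L}"
      and "mobj E (w i) (w (Suc i)) = mobj E (w j) (w (Suc j))"
    then consider "w i = w j" | "w i = w ((j + 1) mod L)" "w ((i + 1) mod L) = w j"
      using mobj_eq_cases wrap by fastforce
    then show "i = j"
    proof cases
      case 1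
      then show ?thesis using inj i j by (auto dest: inj_onD)
    next
      case 2
      have "(j + 1) mod L < L" "(i + 1) mod L < L" using L3 by simp_all
      then have "i = (j + 1) mod L" "(i + 1) mod L = j"
        using 2 inj i j by (auto dest: inj_onD)
      then show ?thesis using mod_Suc_Suc_neq[of j L] j L3 by simp
    qed
  qed
  let ?vs = "map w [0..<L]"
  have objs: "map (\<lambda>i. mobj E (?vs ! i) (?vs ! ((i + 1) mod length ?vs))) [0..<length ?vs]
      = map (\<lambda>i. mobj E (w i) (w (Suc i))) [0..<L]"
    using succ by simp
  have "distinct (map (\<lambda>i. mobj E (?vs ! i) (?vs ! ((i + 1) mod length ?vs))) [0..<length ?vs])"
    unfolding objs using objs_inj by (simp add: distinct_map)
  moreover have "\<forall>i < length ?vs. mstep E A (?vs ! i) (?vs ! ((i + 1) mod length ?vs))"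
    using walk succ unfolding mixed_walk_def by simp
  moreover have "distinct ?vs" using inj by (simp add: distinct_map lessThan_atLeast0)
  ultimately show ?thesis using L3 unfolding mixed_cycle_def by auto
qed

lemma obtain_injective_segment:
  fixes w :: "nat \<Rightarrow> 'a"
  assumes "a < b" "w a = w b"
  obtains a' b' where "a \<le> a'" "a' < b'" "b' \<le> b" "w a' = w b'" "inj_on w {a'..<b'}"
proof -
  have "\<exists>a' b'. a \<le> a' \<and> a' < b' \<and> b' \<le> b \<and> w a' = w b' \<and> inj_on w {a'..<b'}"
    using assms
  proof (induction "b - a" arbitrary: a b rule: less_induct)
    case less
    show ?case
    proof (cases "inj_on w {a..<b}")
      case True
      then show ?thesis using less.prems by blast
    next
      case False
      then obtain x y where "a \<le> x" "x < y" "y < b" "w x = w y"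
        unfolding inj_on_def by (metis atLeastLessThan_iff linorder_neqE_nat)
      moreover from this have "y - x < b - a" by linarith
      ultimately obtain a' b' where "x \<le> a'" "a' < b'" "b' \<le> y" "w a' = w b'" "inj_on w {a'..<b'}"
        using less.hyps[of y x] by blast
      then show ?thesis using \<open>a \<le> x\<close> \<open>y < b\<close> by (intro exI[of _ a'] exI[of _ b']) auto
    qed
  qed
  then show thesis using that by blast
qed

lemma closed_walk_with_arc_length_ge_3:
  assumes mg: "mixed_graph V E A" and walk: "mixed_walk E A w L" and closed: "w L = w 0"
    and arc: "t < L" "A (w t) (w (Suc t))"
  shows "3 \<le> L"
proof -
  have "L \<noteq> 1" using arc closed mg unfolding mixed_graph_def by auto
  moreover have "L \<noteq> 2"
  proof
    assume "L = 2"
    then have "mstep E A (w 0) (w 1)" "mstep E A (w 1) (w 0)"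
      using walk closed unfolding mixed_walk_def by (auto simp: numeral_2_eq_2)
    then have "E (w 0) (w 1)" "E (w 1) (w 0)" using mixed_graph_mstep_back_edge[OF mg] by blast+
    moreover have "t = 0 \<or> t = 1" using arc \<open>L = 2\<close> by linarith
    then have "A (w 0) (w 1) \<or> A (w 1) (w 0)"
      using arc closed \<open>L = 2\<close> by (auto simp: numeral_2_eq_2)
    ultimately show False using mixed_graph_edge_not_arc[OF mg] by blast
  qed
  ultimately show ?thesis using arc by linarith
qed

lemma mixed_walk_excise:
  assumes walk: "mixed_walk E A w L" and ab: "a < b" "b \<le> L" "w a = w b"
  defines "w' \<equiv> \<lambda>i. if i \<le> a then w i else w (b + (i - a))"
  shows "mixed_walk E A w' (a + (L - b))" and "w' (a + (L - b)) = w L"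
    and "\<And>t. t < L \<Longrightarrow> \<not> (a \<le> t \<and> t < b) \<Longrightarrow>
      \<exists>t' < a + (L - b). w' t' = w t \<and> w' (Suc t') = w (Suc t)"
proof -
  have "mixed_walk E A w a" using walk ab unfolding mixed_walk_def by simp
  then show "mixed_walk E A w' (a + (L - b))"
    using mixed_walk_append[OF _ mixed_walk_segment[OF walk, of b L]] ab unfolding w'_def by simp
  show "w' (a + (L - b)) = w L" using ab unfolding w'_def by (cases "b = L") auto
  fix t assume "t < L" "\<not> (a \<le> t \<and> t < b)"
  then consider "t < a" | "b \<le> t" by linarith
  then show "\<exists>t' < a + (L - b). w' t' = w t \<and> w' (Suc t') = w (Suc t)"
  proof cases
    case 1
    then show ?thesis using ab unfolding w'_def by (intro exI[of _ t]) auto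
  next
    case 2
    have "w' (a + (t - b)) = w t" using 2 ab unfolding w'_def by (cases "t = b") auto
    moreover have "w' (Suc (a + (t - b))) = w (Suc t)" using 2 unfolding w'_def by auto
    ultimately show ?thesis using 2 \<open>t < L\<close> by (intro exI[of _ "a + (t - b)"]) auto
  qed
qed

(* The arc matters: x, y, x is a closed walk along a single edge. Splitting a closed walk at a
   repeated vertex, the arc survives in one of the two shorter closed walks. *)
lemma closed_walk_with_arc_length_ge_girth:
  assumes mg: "mixed_graph V E A" and girth: "\<And>vs. mixed_cycle E A vs \<Longrightarrow> g \<le> length vs"
  shows "mixed_walk E A w L \<Longrightarrow> w L = w 0 \<Longrightarrow> t < L \<Longrightarrow> A (w t) (w (Suc t)) \<Longrightarrow> g \<le> L"
proof (induction L arbitrary: w t rule: less_induct)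
  case (less L)
  note walk = less.prems(1) and closed = less.prems(2) and arc = less.prems(3,4)
  show ?case
  proof (cases "inj_on w {..<L}")
    case True
    then show ?thesis using girth injective_closed_walk_is_cycle[OF walk closed True]
        closed_walk_with_arc_length_ge_3[OF mg walk closed arc] by fastforce
  next
    case False
    then obtain a b where ab: "a < b" "b < L" "w a = w b"
      unfolding inj_on_def by (metis lessThan_iff nat_neq_iff)
    show ?thesis
    proof (cases "a \<le> t \<and> t < b")
      case True
      have "mixed_walk E A (\<lambda>i. w (a + i)) (b - a)"
        using mixed_walk_segment[OF walk] ab by simp
      moreover have "b - a < L" "t - a < b - a" using ab True by auto
      ultimately have "g \<le> b - a"
        using less.IH[of "b - a" "\<lambda>i. w (a + i)" "t - a"] arc ab True by simp
      then show ?thesis using ab by linarith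
    next
      case False
      let ?w = "\<lambda>i. if i \<le> a then w i else w (b + (i - a))"
      obtain t' where "t' < a + (L - b)" "A (?w t') (?w (Suc t'))"
        using mixed_walk_excise(3)[OF walk ab(1) _ ab(3)] ab arc False by fastforce
      moreover have "mixed_walk E A ?w (a + (L - b))" "?w (a + (L - b)) = ?w 0"
        using mixed_walk_excise(1,2)[OF walk ab(1) _ ab(3)] ab closed by auto
      moreover have "a + (L - b) < L" using ab by linarith
      ultimately have "g \<le> a + (L - b)" using less.IH[of "a + (L - b)"] by blast
      then show ?thesis using ab by linarith
    qed
  qed
qed

lemma edge_cycle_contains_edge_neighbours:
  assumes mg: "mixed_graph V E A" and cyc: "mixed_cycle E A vs"
    and edges: "\<And>i. i < length vs \<Longrightarrow> E (vs ! i) (vs ! ((i + 1) mod length vs))"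
    and z: "z \<in> set vs" and deg: "card {w \<in> V. E z w} = 2" and y: "E z y"
  shows "y \<in> set vs"
proof -
  define L where "L = length vs"
  have L3: "3 \<le> L" using mixed_cycle_length_ge_3[OF mg cyc] unfolding L_def .
  obtain i where i: "i < L" "z = vs ! i" using z unfolding L_def by (auto simp: in_set_conv_nth)
  define j where "j = (i + (L - 1)) mod L"
  define s where "s = (i + 1) mod L"
  have "j < L" "s < L" using L3 unfolding j_def s_def by simp_all
  have "(j + 1) mod L = i" using mod_pred_Suc[OF i(1)] unfolding j_def .
  then have "s \<noteq> j" using mod_Suc_Suc_neq[OF \<open>j < L\<close> L3] unfolding s_def by metis
  then have "vs ! s \<noteq> vs ! j"
    using cyc \<open>j < L\<close> \<open>s < L\<close> unfolding mixed_cycle_def L_def by (simp add: nth_eq_iff_index_eq)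
  moreover have "E z (vs ! s)" "E z (vs ! j)"
    using edges[of i] edges[of j] \<open>(j + 1) mod L = i\<close> i \<open>j < L\<close> mixed_graph_edge_sym[OF mg]
    unfolding s_def L_def by auto
  ultimately have "{vs ! s, vs ! j} = {w \<in> V. E z w}"
    using deg mg unfolding mixed_graph_def
    by (intro card_subset_eq) (auto simp: card_insert_if)
  then have "y = vs ! s \<or> y = vs ! j" using y mg unfolding mixed_graph_def by blast
  then show ?thesis using \<open>j < L\<close> \<open>s < L\<close> unfolding L_def by auto
qed

section \<open>The lower bound\<close>

(* In the rotated coordinates i + j - D = 2a + e and D + i - j = 2b + e, the points of
   diamond D are the pairs of equal parity in {0..D} x {0..D}. *)
definition diamond :: "nat \<Rightarrow> (nat \<times> nat) set" where
  "diamond D = (\<lambda>(e, a, b). (a + b + e, a + D - b)) `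
     ({0} \<times> {..D div 2} \<times> {..D div 2} \<union> {1} \<times> {..<(D + 1) div 2} \<times> {..<(D + 1) div 2})"

lemma diamond_L1_diameter:
  assumes "(i1, j1) \<in> diamond D" "(i2, j2) \<in> diamond D"
  shows "\<bar>int i1 - int i2\<bar> + \<bar>int j1 - int j2\<bar> \<le> int D"
  using assms unfolding diamond_def by (auto simp: abs_if)

lemma card_diamond: "card (diamond D) = ((D + 1)^2 + 1) div 2"
proof -
  let ?f = "\<lambda>(e, a, b). (a + b + e, a + D - b)"
  let ?I = "{0::nat} \<times> {..D div 2} \<times> {..D div 2} \<union> {1} \<times> {..<(D + 1) div 2} \<times> {..<(D + 1) div 2}"
  have "inj_on ?f ?I"
  proof (rule inj_onI)
    fix p q assume "p \<in> ?I" "q \<in> ?I" "?f p = ?f q"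
    moreover obtain e a b e' a' b' where "p = (e, a, b)" "q = (e', a', b')" by (cases p, cases q)
    ultimately have "e \<le> 1" "e' \<le> 1" "2 * a + e = 2 * a' + e'" "2 * b + e = 2 * b' + e'" by auto
    then show "p = q" using \<open>p = (e, a, b)\<close> \<open>q = (e', a', b')\<close> by simp presburger
  qed
  then have "card (diamond D) = card ?I" unfolding diamond_def by (simp add: card_image)
  also have "\<dots> = (D div 2 + 1)^2 + ((D + 1) div 2)^2"
    by (subst card_Un_disjoint) (auto simp: card_cartesian_product power2_eq_square)
  also have "\<dots> = ((D + 1)^2 + 1) div 2"
    by (cases "even D") (auto elim!: evenE oddE simp: power2_eq_square algebra_simps)
  finally show ?thesis .
qed

definition arc_succ :: "('a \<Rightarrow> 'a \<Rightarrow> bool) \<Rightarrow> 'a \<Rightarrow> 'a" where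
  "arc_succ A x = (SOME y. A x y)"

fun edge_ray :: "('a \<Rightarrow> 'a \<Rightarrow> bool) \<Rightarrow> 'a \<Rightarrow> 'a \<Rightarrow> nat \<Rightarrow> 'a" where
  "edge_ray E x y 0 = x"
| "edge_ray E x y (Suc 0) = y"
| "edge_ray E x y (Suc (Suc i)) = (SOME z. E (edge_ray E x y (Suc i)) z \<and> z \<noteq> edge_ray E x y i)"

declare edge_ray.simps(3) [simp del]

locale mixed_12_graph =
  fixes V :: "'a set" and E A :: "'a \<Rightarrow> 'a \<Rightarrow> bool" and g :: nat
  assumes zrg: "zrg_mixed_graph V E A 1 2 g"
begin

lemma mixed_graph: "mixed_graph V E A"
  using zrg unfolding zrg_mixed_graph_def by blast

lemma girth_le_length: "mixed_cycle E A vs \<Longrightarrow> g \<le> length vs"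
  using zrg unfolding zrg_mixed_graph_def has_girth_def by blast

lemma girth_cycle: "\<exists>vs. mixed_cycle E A vs \<and> length vs = g"
  using zrg unfolding zrg_mixed_graph_def has_girth_def by blast

lemma arc_succ: "x \<in> V \<Longrightarrow> A x (arc_succ A x)"
proof -
  assume "x \<in> V"
  then have "card {y \<in> V. A x y} = 1" using zrg unfolding zrg_mixed_graph_def by blast
  then have "\<exists>y. A x y" by (metis (no_types, lifting) card.empty empty_Collect_eq zero_neq_one)
  then show ?thesis unfolding arc_succ_def by (rule someI_ex)
qed

lemma arc_succ_in: "x \<in> V \<Longrightarrow> arc_succ A x \<in> V"
  using arc_succ mixed_graph_mstep_vertices[OF mixed_graph] unfolding mstep_def by blast

lemma inj_on_arc_succ: "inj_on (arc_succ A) V"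
proof (rule inj_onI)
  fix x y assume x: "x \<in> V" and y: "y \<in> V" and eq: "arc_succ A x = arc_succ A y"
  define z where "z = arc_succ A x"
  have "card {u \<in> V. A u z} = 1"
    using zrg arc_succ_in[OF x] unfolding zrg_mixed_graph_def z_def by blast
  moreover have "x \<in> {u \<in> V. A u z}" "y \<in> {u \<in> V. A u z}"
    using arc_succ[OF x] arc_succ[OF y] x y eq unfolding z_def by auto
  ultimately show "x = y" by (metis card_1_singletonE singletonD)
qed

lemma funpow_arc_succ_in: "x \<in> V \<Longrightarrow> (arc_succ A ^^ j) x \<in> V"
  by (induction j) (auto simp: arc_succ_in)

lemma inj_on_funpow_arc_succ: "inj_on (arc_succ A ^^ j) V"
proof (induction j)
  case (Suc j)
  have "inj_on (arc_succ A \<circ> (arc_succ A ^^ j)) V"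
    using Suc inj_on_arc_succ funpow_arc_succ_in by (intro comp_inj_on) (auto intro: inj_on_subset)
  then show ?case by (simp add: comp_def)
qed simp

lemma funpow_arc_succ_cancel:
  assumes "x \<in> V" "y \<in> V" "j2 \<le> j1" "(arc_succ A ^^ j1) x = (arc_succ A ^^ j2) y"
  shows "(arc_succ A ^^ (j1 - j2)) x = y"
proof -
  have "arc_succ A ^^ j1 = (arc_succ A ^^ j2) \<circ> (arc_succ A ^^ (j1 - j2))"
    using assms(3) by (simp flip: funpow_add)
  then have "(arc_succ A ^^ j2) ((arc_succ A ^^ (j1 - j2)) x) = (arc_succ A ^^ j2) y"
    using assms(4) by simp
  then show ?thesis using inj_on_funpow_arc_succ funpow_arc_succ_in assms(1,2) by (meson inj_onD)
qed

lemma arc_succ_walk: "x \<in> V \<Longrightarrow> mixed_walk E A (\<lambda>t. (arc_succ A ^^ t) x) d"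
  unfolding mixed_walk_def mstep_def using arc_succ funpow_arc_succ_in by simp

lemma other_edge_neighbour: "x \<in> V \<Longrightarrow> \<exists>z. E x z \<and> z \<noteq> y"
proof -
  assume "x \<in> V"
  then have "card {z \<in> V. E x z} = 2" using zrg unfolding zrg_mixed_graph_def by blast
  then obtain a b where "a \<noteq> b" "{z \<in> V. E x z} = {a, b}" by (meson card_2_iff)
  then show ?thesis by (metis (no_types, lifting) insertCI mem_Collect_eq)
qed

lemma girth_ge_3: "3 \<le> g"
  using girth_cycle mixed_cycle_length_ge_3[OF mixed_graph] by blast

lemma exists_edge: "\<exists>x y. E x y"
proof -
  obtain vs where "mixed_cycle E A vs" using girth_cycle by blast
  then have "mstep E A (vs ! 0) (vs ! (1 mod length vs))" unfolding mixed_cycle_def by auto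
  then have "vs ! 0 \<in> V" using mixed_graph_mstep_vertices[OF mixed_graph] by blast
  then show ?thesis using other_edge_neighbour by blast
qed

lemma closed_walk_through_arcs_length_ge_girth:
  assumes u: "u \<in> V" and d: "0 < d"
    and return: "mixed_walk E A q l" "q 0 = (arc_succ A ^^ d) u" "q l = u"
  shows "g \<le> d + l"
proof -
  let ?w = "\<lambda>t. if t \<le> d then (arc_succ A ^^ t) u else q (t - d)"
  have "mixed_walk E A ?w (d + l)"
    using mixed_walk_append[OF arc_succ_walk[OF u] return(1)] return(2) by simp
  moreover have "?w (d + l) = ?w 0" using return(2,3) d by auto
  moreover have "A (?w 0) (?w (Suc 0))" using arc_succ[OF u] d by simp
  ultimately show ?thesis
    using closed_walk_with_arc_length_ge_girth[OF mixed_graph girth_le_length] d by blast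
qed

context
  fixes x y assumes xy: "E x y"
begin

lemma edge_ray_edge: "E (edge_ray E x y i) (edge_ray E x y (Suc i))"
proof (induction i)
  case (Suc i)
  then have "edge_ray E x y (Suc i) \<in> V"
    using mixed_graph_mstep_vertices[OF mixed_graph] unfolding mstep_def by blast
  then have "\<exists>z. E (edge_ray E x y (Suc i)) z \<and> z \<noteq> edge_ray E x y i"
    using other_edge_neighbour by blast
  then show ?case by (simp add: edge_ray.simps(3), rule someI_ex[THEN conjunct1])
qed (simp add: xy)

lemma edge_ray_in: "edge_ray E x y i \<in> V"
  using edge_ray_edge[of i] mixed_graph_mstep_vertices[OF mixed_graph] unfolding mstep_def by blast

lemma edge_ray_nonbacktracking: "edge_ray E x y (Suc (Suc i)) \<noteq> edge_ray E x y i"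
proof -
  have "\<exists>z. E (edge_ray E x y (Suc i)) z \<and> z \<noteq> edge_ray E x y i"
    using other_edge_neighbour edge_ray_in by blast
  then show ?thesis by (simp add: edge_ray.simps(3), rule someI_ex[THEN conjunct2])
qed

lemma edge_ray_walk: "mixed_walk E A (\<lambda>t. edge_ray E x y (i + t)) d"
  using edge_ray_edge unfolding mixed_walk_def mstep_def by simp

lemma edge_ray_reverse_walk: "mixed_walk E A (\<lambda>t. edge_ray E x y (j - t)) (j - i)"
proof -
  have "E (edge_ray E x y (j - t)) (edge_ray E x y (j - Suc t))" if "t < j - i" for t
  proof -
    have "j - t = Suc (j - Suc t)" using that by simp
    then show ?thesis
      using edge_ray_edge[of "j - Suc t"] mixed_graph_edge_sym[OF mixed_graph] by simp
  qed
  then show ?thesis unfolding mixed_walk_def mstep_def by simp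
qed

lemma edge_ray_distinct:
  assumes "i < j" "j < i + g"
  shows "edge_ray E x y i \<noteq> edge_ray E x y j"
proof
  assume "edge_ray E x y i = edge_ray E x y j"
  then obtain a b where ab: "i \<le> a" "a < b" "b \<le> j" "edge_ray E x y a = edge_ray E x y b"
    and inj: "inj_on (edge_ray E x y) {a..<b}"
    using obtain_injective_segment assms(1) by metis
  let ?w = "\<lambda>t. edge_ray E x y (a + t)"
  have "b \<noteq> Suc a"
    using ab edge_ray_edge[of a] mixed_graph_mstep_irrefl[OF mixed_graph] unfolding mstep_def by auto
  moreover have "b \<noteq> Suc (Suc a)" using ab edge_ray_nonbacktracking[of a] by auto
  ultimately have "3 \<le> b - a" using ab by linarith
  moreover have "inj_on ?w {..<b - a}"
  proof (rule inj_onI)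
    fix s t assume "s \<in> {..<b - a}" "t \<in> {..<b - a}" "?w s = ?w t"
    then show "s = t" using inj_onD[OF inj, of "a + s" "a + t"] by simp
  qed
  ultimately have "mixed_cycle E A (map ?w [0..<b - a])"
    using injective_closed_walk_is_cycle[OF edge_ray_walk] ab by simp
  then have "g \<le> b - a" using girth_le_length by fastforce
  then show False using ab assms by linarith
qed

lemma funpow_arc_succ_edge_ray_neq:
  assumes d: "0 < d" and ij: "i \<le> j" and short: "d + (j - i) < g"
  shows "(arc_succ A ^^ d) (edge_ray E x y i) \<noteq> edge_ray E x y j"
    and "(arc_succ A ^^ d) (edge_ray E x y j) \<noteq> edge_ray E x y i"
proof -
  show "(arc_succ A ^^ d) (edge_ray E x y i) \<noteq> edge_ray E x y j"
  proof
    assume "(arc_succ A ^^ d) (edge_ray E x y i) = edge_ray E x y j"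
    then have "g \<le> d + (j - i)"
      using closed_walk_through_arcs_length_ge_girth[OF edge_ray_in[of i] d
          edge_ray_reverse_walk[of j i]] ij
      by simp
    then show False using short by linarith
  qed
  show "(arc_succ A ^^ d) (edge_ray E x y j) \<noteq> edge_ray E x y i"
  proof
    assume "(arc_succ A ^^ d) (edge_ray E x y j) = edge_ray E x y i"
    then have "g \<le> d + (j - i)"
      using closed_walk_through_arcs_length_ge_girth[OF edge_ray_in[of j] d
          edge_ray_walk[of i "j - i"]] ij
      by simp
    then show False using short by linarith
  qed
qed

lemma funpow_arc_succ_edge_ray_eq:
  assumes eq: "(arc_succ A ^^ j1) (edge_ray E x y i1) = (arc_succ A ^^ j2) (edge_ray E x y i2)"
    and close: "\<bar>int i1 - int i2\<bar> + \<bar>int j1 - int j2\<bar> < int g"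
  shows "i1 = i2 \<and> j1 = j2"
proof -
  have ordered: "i1 = i2 \<and> j1 = j2"
    if "j2 \<le> j1"
      and eq: "(arc_succ A ^^ j1) (edge_ray E x y i1) = (arc_succ A ^^ j2) (edge_ray E x y i2)"
      and close: "\<bar>int i1 - int i2\<bar> + (int j1 - int j2) < int g" for i1 j1 i2 j2
  proof -
    define d where "d = j1 - j2"
    have shift: "(arc_succ A ^^ d) (edge_ray E x y i1) = edge_ray E x y i2"
      using funpow_arc_succ_cancel[OF edge_ray_in edge_ray_in \<open>j2 \<le> j1\<close> eq] unfolding d_def .
    have short: "d + (i2 - i1) < g" "d + (i1 - i2) < g"
      using close \<open>j2 \<le> j1\<close> unfolding d_def by (auto simp: abs_if split: if_splits)
    show ?thesis
    proof (cases "d = 0")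
      case True
      then have "edge_ray E x y i1 = edge_ray E x y i2" using shift by simp
      moreover have "i1 < i2 + g" "i2 < i1 + g" using short True by arith+
      ultimately have "i1 = i2"
        using edge_ray_distinct[of i1 i2] edge_ray_distinct[of i2 i1]
        by (cases i1 i2 rule: linorder_cases) auto
      then show ?thesis using True \<open>j2 \<le> j1\<close> unfolding d_def by simp
    next
      case False
      then show ?thesis
        using shift short funpow_arc_succ_edge_ray_neq(1)[of d i1 i2]
          funpow_arc_succ_edge_ray_neq(2)[of d i2 i1]
        by (cases "i1 \<le> i2") auto
    qed
  qed
  show ?thesis
    using ordered[of j2 j1 i1 i2] ordered[of j1 j2 i2 i1] eq close
    by (cases "j2 \<le> j1") (auto simp: abs_minus_commute)
qed

end

lemma card_ge_of_L1_diameter_lt_girth: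
  assumes "\<And>i1 j1 i2 j2. (i1, j1) \<in> P \<Longrightarrow> (i2, j2) \<in> P \<Longrightarrow>
    \<bar>int i1 - int i2\<bar> + \<bar>int j1 - int j2\<bar> < int g"
  shows "card P \<le> card V"
proof -
  obtain x y where xy: "E x y" using exists_edge by blast
  let ?f = "\<lambda>(i, j). (arc_succ A ^^ j) (edge_ray E x y i)"
  have "inj_on ?f P"
    using funpow_arc_succ_edge_ray_eq[OF xy] assms by (auto simp: inj_on_def)
  moreover have "?f ` P \<subseteq> V" using funpow_arc_succ_in edge_ray_in[OF xy] by auto
  moreover have "finite V" using mixed_graph unfolding mixed_graph_def by blast
  ultimately show ?thesis by (rule card_inj_on_le)
qed

lemma card_ge_half_girth_square: "(g^2 + 1) div 2 \<le> card V"
proof -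
  have "card (diamond (g - 1)) \<le> card V"
    using diamond_L1_diameter girth_ge_3 by (intro card_ge_of_L1_diameter_lt_girth) fastforce
  then show ?thesis using card_diamond[of "g - 1"] girth_ge_3 by simp
qed

end

section \<open>Circulant mixed graphs attaining the bound\<close>

lemma dvd_between_cases:
  fixes n x :: int
  assumes "n dvd x" "- n < x" "x < 2 * n"
  shows "x = 0 \<or> x = n"
proof -
  obtain c where c: "x = n * c" using assms(1) by blast
  have n: "0 < n" using assms(2,3) by linarith
  have "n * (- 1) < n * c" "n * c < n * 2" using assms(2,3) unfolding c by (simp_all add: mult.commute)
  then have "- 1 < c" "c < 2" using n by (simp_all only: mult_less_cancel_left_pos)
  then consider "c = 0" | "c = 1" by linarith
  then show ?thesis using c by cases simp_all
qed

lemma no_short_relation_odd: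
  fixes k a b :: int
  assumes "1 \<le> k" "0 \<le> b" "\<bar>a\<bar> + b \<le> 2 * k"
    and "(2 * k^2 + 2 * k + 1) dvd (a + b * (2 * k + 1))"
  shows "a = 0 \<and> b = 0"
proof -
  have expand: "b * (2 * k + 1) = 2 * (b * k) + b" "k^2 = k * k"
    by (simp_all add: algebra_simps power2_eq_square)
  have bk_nonneg: "0 \<le> b * k" using assms by simp
  moreover have "b * k \<le> 2 * (k * k)" using mult_right_mono[of b "2 * k" k] assms by simp
  moreover have bk_cases: "b = 0 \<and> b * k = 0 \<or> 1 \<le> b \<and> k \<le> b * k"
    using mult_right_mono[of 1 b k] assms by auto
  ultimately have "a + b * (2 * k + 1) = 0 \<or> a + b * (2 * k + 1) = 2 * k^2 + 2 * k + 1"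
    using assms abs_ge_self[of a] unfolding expand by (intro dvd_between_cases) (smt (verit))+
  then show ?thesis
  proof
    assume "a + b * (2 * k + 1) = 0"
    then show ?thesis
      using bk_nonneg bk_cases abs_ge_minus_self[of a] assms unfolding expand by (smt (verit))
  next
    assume sum: "a + b * (2 * k + 1) = 2 * k^2 + 2 * k + 1"
    have "b * k \<le> k * k" if "b \<le> k" using mult_right_mono[OF that, of k] assms by simp
    moreover have "k * k + k \<le> b * k" if "k + 1 \<le> b"
      using mult_right_mono[OF that, of k] assms by (simp add: algebra_simps)
    ultimately show ?thesis using sum assms abs_ge_self[of a] abs_ge_minus_self[of a]
      unfolding expand by (smt (verit))
  qed
qed

lemma no_short_relation_even:
  fixes k a b :: int
  assumes "2 \<le> k" "0 \<le> b" "\<bar>a\<bar> + b \<le> 2 * k - 1"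
    and "(2 * k^2) dvd (a + b * (2 * k - 1))"
  shows "a = 0 \<and> b = 0"
proof -
  have expand: "b * (2 * k - 1) = 2 * (b * k) - b" "k^2 = k * k"
    by (simp_all add: algebra_simps power2_eq_square)
  have bk_nonneg: "0 \<le> b * k" using assms by simp
  moreover have "b * k \<le> 2 * (k * k) - k" using mult_right_mono[of b "2 * k - 1" k] assms
    by (simp add: algebra_simps)
  moreover have "k \<le> k * k" using assms(1) by simp
  moreover have bk_cases: "b = 0 \<and> b * k = 0 \<or> 1 \<le> b \<and> k \<le> b * k"
    using mult_right_mono[of 1 b k] assms by auto
  ultimately have "a + b * (2 * k - 1) = 0 \<or> a + b * (2 * k - 1) = 2 * k^2"
    using assms abs_ge_self[of a] unfolding expand by (intro dvd_between_cases) (smt (verit))+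
  then show ?thesis
  proof
    assume "a + b * (2 * k - 1) = 0"
    then show ?thesis
      using bk_nonneg bk_cases abs_ge_minus_self[of a] assms unfolding expand by (smt (verit))
  next
    assume sum: "a + b * (2 * k - 1) = 2 * k^2"
    have "k - b \<le> k * k - b * k" if "b \<le> k"
      using mult_left_mono[of 1 k "k - b"] that assms by (simp add: algebra_simps)
    moreover have "k * k + k \<le> b * k" if "k + 1 \<le> b"
      using mult_right_mono[OF that, of k] assms by (simp add: algebra_simps)
    ultimately show ?thesis using sum assms abs_ge_self[of a] abs_ge_minus_self[of a]
      unfolding expand by (smt (verit))
  qed
qed

lemma dvd_sum_of_closed_displacements:
  fixes f :: "nat \<Rightarrow> int" and n :: int
  assumes closed: "f L = f 0" and steps: "\<And>i. i < L \<Longrightarrow> n dvd (f (Suc i) - f i - c i)"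
  shows "n dvd (\<Sum>i<L. c i)"
proof -
  have "n dvd (\<Sum>i<L. f (Suc i) - f i - c i)" using steps by (intro dvd_sum) auto
  moreover have "(\<Sum>i<L. f (Suc i) - f i - c i) = (\<Sum>i<L. f (Suc i) - f i) - (\<Sum>i<L. c i)"
    by (rule sum_subtractf)
  moreover have "(\<Sum>i<L. f (Suc i) - f i) = 0"
    unfolding sum_lessThan_telescope using closed by simp
  ultimately show ?thesis by simp
qed

definition circ_edge :: "nat \<Rightarrow> nat \<Rightarrow> nat \<Rightarrow> bool" where
  "circ_edge n x y \<longleftrightarrow>
     x < n \<and> y < n \<and> (int n dvd (int y - int x - 1) \<or> int n dvd (int y - int x + 1))"

definition circ_arc :: "nat \<Rightarrow> nat \<Rightarrow> nat \<Rightarrow> nat \<Rightarrow> bool" where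
  "circ_arc n m x y \<longleftrightarrow> x < n \<and> y < n \<and> int n dvd (int y - int x - int m)"

lemma circ_edge_sym: "circ_edge n x y \<Longrightarrow> circ_edge n y x"
proof -
  have "int x - int y - 1 = - (int y - int x + 1)" "int x - int y + 1 = - (int y - int x - 1)"
    by simp_all
  then show "circ_edge n x y \<Longrightarrow> circ_edge n y x" unfolding circ_edge_def by (metis dvd_minus_iff)
qed

lemma dvd_diff_iff_eq_mod:
  assumes "y < n"
  shows "int n dvd (int y - int c) \<longleftrightarrow> y = c mod n"
proof -
  have "int n dvd (int y - int c) \<longleftrightarrow> int y mod int n = int c mod int n" by (simp add: mod_eq_dvd_iff)
  then show ?thesis using assms by (simp flip: of_nat_mod)
qed

locale mixed_circulant =
  fixes n m g k :: nat
  assumes girth_ge_3: "3 \<le> g"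
    and no_short_relation:
      "\<And>a b :: int. 0 \<le> b \<Longrightarrow> \<bar>a\<bar> + b < int g \<Longrightarrow> int n dvd (a + b * int m) \<Longrightarrow> a = 0 \<and> b = 0"
    and k_pos: "0 < k" and k_less: "k < g"
    and order_eq: "n = k * m + (g - k)"
begin

lemma no_small_relation:
  "0 \<le> b \<Longrightarrow> \<bar>a\<bar> + b \<le> 2 \<Longrightarrow> int n dvd (a + b * int m) \<Longrightarrow> a = 0 \<and> b = 0"
  using no_short_relation girth_ge_3 by force

lemma m_pos: "0 < m"
  using no_small_relation[of 1 0] by (cases "m = 0") auto

lemma g_le_n: "g \<le> n"
proof -
  have "k \<le> k * m" using m_pos by simp
  then show ?thesis using order_eq k_less by linarith
qed

lemma m_less_n: "m < n"
proof -
  have "m \<le> k * m" using k_pos by simp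
  then show ?thesis using order_eq k_less by linarith
qed

lemma circ_edge_iff:
  assumes "x < n" "y < n"
  shows "circ_edge n x y \<longleftrightarrow> y = (x + 1) mod n \<or> y = (x + (n - 1)) mod n"
proof -
  have "int y - int x - 1 = int y - int (x + 1)" by simp
  moreover have "int y - int x + 1 = int y - int (x + (n - 1)) + int n"
    using g_le_n girth_ge_3 by (simp add: of_nat_diff)
  ultimately show ?thesis
    unfolding circ_edge_def using dvd_diff_iff_eq_mod[OF assms(2)] assms
    by (metis dvd_add_times_triv_right_iff mult.left_neutral)
qed

lemma circ_arc_iff:
  assumes "x < n" "y < n"
  shows "circ_arc n m x y \<longleftrightarrow> y = (x + m) mod n"
proof -
  have "int y - int x - int m = int y - int (x + m)" by simp
  then show ?thesis unfolding circ_arc_def using dvd_diff_iff_eq_mod[OF assms(2)] assms by presburger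
qed

lemma circ_arc_in_iff:
  assumes "x < n" "y < n"
  shows "circ_arc n m y x \<longleftrightarrow> y = (x + (n - m)) mod n"
proof -
  have "int x - int y - int m = - (int y - int (x + (n - m)) + int n)"
    using m_less_n by (simp add: of_nat_diff)
  then show ?thesis unfolding circ_arc_def using dvd_diff_iff_eq_mod[OF assms(2)] assms
    by (metis dvd_add_times_triv_right_iff dvd_minus_iff mult.left_neutral)
qed

lemma mixed_graph_circ: "mixed_graph {0..<n} (circ_edge n) (circ_arc n m)"
  unfolding mixed_graph_def
proof (intro conjI allI impI)
  fix u v assume "circ_edge n u v"
  then show "u \<in> {0..<n}" "v \<in> {0..<n}" unfolding circ_edge_def by auto
next
  fix u v assume "circ_arc n m u v"
  then show "u \<in> {0..<n}" "v \<in> {0..<n}" unfolding circ_arc_def by auto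
next
  fix u v assume "circ_edge n u v"
  then show "circ_edge n v u" by (rule circ_edge_sym)
next
  fix u show "\<not> circ_edge n u u"
    using no_small_relation[of 0 "-1"] no_small_relation[of 0 1] unfolding circ_edge_def by auto
next
  fix u show "\<not> circ_arc n m u u"
    using no_small_relation[of 1 0] unfolding circ_arc_def by auto
next
  fix u v show "\<not> (circ_edge n u v \<and> circ_arc n m u v)"
  proof
    assume "circ_edge n u v \<and> circ_arc n m u v"
    then have "int n dvd (int v - int u - int m)"
      and "int n dvd (int v - int u - 1) \<or> int n dvd (int v - int u + 1)"
      unfolding circ_edge_def circ_arc_def by auto
    moreover have "(int v - int u - 1) - (int v - int u - int m) = -1 + 1 * int m"
      "(int v - int u + 1) - (int v - int u - int m) = 1 + 1 * int m" by simp_all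
    ultimately have "int n dvd (-1 + 1 * int m) \<or> int n dvd (1 + 1 * int m)" by (metis dvd_diff)
    then show False using no_small_relation[of 1 "-1"] no_small_relation[of 1 1] by auto
  qed
next
  fix u v show "\<not> (circ_arc n m u v \<and> circ_arc n m v u)"
  proof
    assume "circ_arc n m u v \<and> circ_arc n m v u"
    then have "int n dvd (int v - int u - int m)" "int n dvd (int u - int v - int m)"
      unfolding circ_arc_def by auto
    moreover have "(int v - int u - int m) + (int u - int v - int m) = - (0 + 2 * int m)" by simp
    ultimately have "int n dvd (0 + 2 * int m)" by (metis dvd_add dvd_minus_iff)
    then show False using no_small_relation[of 2 0] by auto
  qed
qed simp

lemma circ_degrees:
  assumes "v < n"
  shows "card {w \<in> {0..<n}. circ_arc n m v w} = 1" "card {w \<in> {0..<n}. circ_arc n m w v} = 1"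
    and "card {w \<in> {0..<n}. circ_edge n v w} = 2"
proof -
  have "{w \<in> {0..<n}. circ_arc n m v w} = {(v + m) mod n}"
    using circ_arc_iff[OF assms] g_le_n girth_ge_3 by auto
  then show "card {w \<in> {0..<n}. circ_arc n m v w} = 1" by simp
  have "{w \<in> {0..<n}. circ_arc n m w v} = {(v + (n - m)) mod n}"
    using circ_arc_in_iff[OF assms] g_le_n girth_ge_3 by auto
  then show "card {w \<in> {0..<n}. circ_arc n m w v} = 1" by simp
  have "circ_edge n v ((v + 1) mod n)" "circ_edge n v ((v + (n - 1)) mod n)"
    using circ_edge_iff[OF assms] g_le_n girth_ge_3 by simp_all
  moreover have "(v + 1) mod n \<noteq> (v + (n - 1)) mod n"
    using mod_Suc_Suc_neq[of "(v + (n - 1)) mod n" n] mod_pred_Suc[OF assms] g_le_n girth_ge_3 by simp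
  moreover have "{w \<in> {0..<n}. circ_edge n v w} = {(v + 1) mod n, (v + (n - 1)) mod n}"
    using circ_edge_iff[OF assms] g_le_n girth_ge_3 by auto
  ultimately show "card {w \<in> {0..<n}. circ_edge n v w} = 2" by simp
qed

lemma short_cycle_uses_only_edges:
  assumes cyc: "mixed_cycle (circ_edge n) (circ_arc n m) vs" and short: "length vs < g"
    and i: "i < length vs"
  shows "circ_edge n (vs ! i) (vs ! ((i + 1) mod length vs))"
proof -
  define L where "L = length vs"
  have steps: "\<forall>i<L. mstep (circ_edge n) (circ_arc n m) (vs ! i) (vs ! (Suc i mod L))"
    using cyc unfolding mixed_cycle_def L_def by simp
  define f where "f t = int (vs ! (t mod L))" for t
  define arc where "arc i \<longleftrightarrow> circ_arc n m (vs ! i) (vs ! (Suc i mod L))" for i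
  define b where "b i = (if arc i then 1 else 0 :: int)" for i
  \<comment> \<open>the displacement of step i modulo n is a i + b i * m\<close>
  define a where "a i = (if arc i then 0 else if int n dvd (f (Suc i) - f i - 1) then 1 else -1 :: int)"
    for i
  have displacement: "int n dvd (f (Suc i) - f i - (a i + b i * int m))" if "i < L" for i
  proof (cases "arc i")
    case True
    then show ?thesis using that unfolding a_def b_def f_def arc_def circ_arc_def by simp
  next
    case False
    then have "circ_edge n (vs ! i) (vs ! (Suc i mod L))" using steps that unfolding arc_def mstep_def by blast
    then show ?thesis using False that unfolding a_def b_def f_def circ_edge_def by auto
  qed
  moreover have "f L = f 0" by (simp add: f_def)
  ultimately have "int n dvd (\<Sum>i<L. a i + b i * int m)"
    using dvd_sum_of_closed_displacements[where c = "\<lambda>i. a i + b i * int m"] by blast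
  then have "int n dvd ((\<Sum>i<L. a i) + (\<Sum>i<L. b i) * int m)"
    by (simp add: sum.distrib sum_distrib_right)
  moreover have "\<bar>\<Sum>i<L. a i\<bar> + (\<Sum>i<L. b i) \<le> (\<Sum>i<L. \<bar>a i\<bar> + b i)"
    using sum_abs[of a "{..<L}"] by (simp add: sum.distrib)
  moreover have "(\<Sum>i<L. \<bar>a i\<bar> + b i) \<le> int L"
    using sum_mono[of "{..<L}" "\<lambda>i. \<bar>a i\<bar> + b i" "\<lambda>_. 1"] unfolding a_def b_def by force
  moreover have b_nonneg: "\<forall>i\<in>{..<L}. 0 \<le> b i" unfolding b_def by simp
  ultimately have "(\<Sum>i<L. b i) = 0"
    using no_short_relation[of "\<Sum>i<L. b i" "\<Sum>i<L. a i"] short sum_nonneg[of "{..<L}" b]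
    unfolding L_def by fastforce
  then have "b i = 0" using sum_nonneg_eq_0_iff[of "{..<L}" b] b_nonneg i unfolding L_def by simp
  then have "\<not> arc i" unfolding b_def by (simp split: if_splits)
  then show ?thesis using steps i unfolding arc_def mstep_def L_def by auto
qed

lemma edge_cycle_covers_vertices:
  assumes cyc: "mixed_cycle (circ_edge n) (circ_arc n m) vs"
    and edges: "\<And>i. i < length vs \<Longrightarrow> circ_edge n (vs ! i) (vs ! ((i + 1) mod length vs))"
  shows "{0..<n} \<subseteq> set vs"
proof -
  have in_V: "z < n" if "z \<in> set vs" for z
    using that edges unfolding circ_edge_def by (auto simp: in_set_conv_nth)
  have succ: "(z + 1) mod n \<in> set vs" if z: "z \<in> set vs" for z
  proof (rule edge_cycle_contains_edge_neighbours[OF mixed_graph_circ cyc edges z])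
    show "card {w \<in> {0..<n}. circ_edge n z w} = 2" using circ_degrees(3) in_V[OF z] .
    show "circ_edge n z ((z + 1) mod n)" using circ_edge_iff in_V[OF z] g_le_n girth_ge_3 by simp
  qed
  obtain z0 where z0: "z0 \<in> set vs" using cyc unfolding mixed_cycle_def by (meson last_in_set)
  have walk: "(z0 + t) mod n \<in> set vs" for t
  proof (induction t)
    case (Suc t)
    then show ?case using succ[OF Suc] by (simp add: mod_Suc_eq)
  qed (simp add: z0 in_V)
  show ?thesis
  proof
    fix z assume "z \<in> {0..<n}"
    then have "(z0 + (n - z0 + z)) mod n = z" using in_V[OF z0] by simp
    then show "z \<in> set vs" using walk[of "n - z0 + z"] by simp
  qed
qed

lemma circ_girth_le_length:
  assumes cyc: "mixed_cycle (circ_edge n) (circ_arc n m) vs"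
  shows "g \<le> length vs"
proof (rule ccontr)
  assume "\<not> g \<le> length vs"
  then have "{0..<n} \<subseteq> set vs"
    using edge_cycle_covers_vertices[OF cyc] short_cycle_uses_only_edges[OF cyc] by simp
  then have "n \<le> length vs"
    using card_mono[of "set vs" "{0..<n}"] card_length[of vs] by simp
  then show False using \<open>\<not> g \<le> length vs\<close> g_le_n by simp
qed

(* k arcs followed by g - k edges lead from 0 to k m + (g - k) = n, which is 0 again. *)
definition witness_vertex :: "nat \<Rightarrow> nat" where
  "witness_vertex t = (if t \<le> k then t * m else k * m + (t - k))"

lemma witness_vertex_Suc:
  "witness_vertex (Suc t) = (if t < k then witness_vertex t + m else witness_vertex t + 1)"
  unfolding witness_vertex_def by auto

lemma strict_mono_witness_vertex: "strict_mono witness_vertex"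
  unfolding strict_mono_Suc_iff witness_vertex_Suc using m_pos by simp

lemma witness_vertex_g: "witness_vertex g = n"
  using k_less order_eq unfolding witness_vertex_def by simp

lemma witness_vertex_less: "t < g \<Longrightarrow> witness_vertex t < n"
  using strict_mono_witness_vertex witness_vertex_g by (metis strict_mono_less)

lemma witness_cycle: "mixed_cycle (circ_edge n) (circ_arc n m) (map (\<lambda>t. witness_vertex t mod n) [0..<g])"
proof (rule injective_closed_walk_is_cycle[OF _ _ _ girth_ge_3])
  show "mixed_walk (circ_edge n) (circ_arc n m) (\<lambda>t. witness_vertex t mod n) g"
    unfolding mixed_walk_def mstep_def
  proof (intro allI impI)
    fix t assume "t < g"
    then have "witness_vertex t < n" "witness_vertex (Suc t) mod n < n"
      using witness_vertex_less g_le_n girth_ge_3 by simp_all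
    then show "circ_edge n (witness_vertex t mod n) (witness_vertex (Suc t) mod n)
        \<or> circ_arc n m (witness_vertex t mod n) (witness_vertex (Suc t) mod n)"
      using circ_edge_iff circ_arc_iff by (simp add: witness_vertex_Suc mod_add_left_eq)
  qed
  show "witness_vertex g mod n = witness_vertex 0 mod n"
    using witness_vertex_g unfolding witness_vertex_def by simp
  show "inj_on (\<lambda>t. witness_vertex t mod n) {..<g}"
    using strict_mono_witness_vertex witness_vertex_less
    by (auto intro!: inj_onI dest: strict_mono_eq)
qed

lemma zrg_mixed_graph_circ: "zrg_mixed_graph {0..<n} (circ_edge n) (circ_arc n m) 1 2 g"
  unfolding zrg_mixed_graph_def has_girth_def
  using mixed_graph_circ circ_degrees circ_girth_le_length witness_cycle by fastforce

end

lemma exists_mixed_12_graph: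
  assumes "3 \<le> g"
  shows "\<exists>(V :: nat set) E A. zrg_mixed_graph V E A 1 2 g \<and> card V = (g^2 + 1) div 2"
proof (cases "odd g")
  case True
  then obtain k where g: "g = 2 * k + 1" by (rule oddE)
  interpret mixed_circulant "2 * k^2 + 2 * k + 1" "2 * k + 1" g k
  proof
    fix a b :: int
    assume "0 \<le> b" "\<bar>a\<bar> + b < int g" "int (2 * k^2 + 2 * k + 1) dvd (a + b * int (2 * k + 1))"
    then show "a = 0 \<and> b = 0"
      using assms g by (intro no_short_relation_odd[of "int k"]) (simp_all add: ac_simps)
  qed (use assms g in \<open>auto simp: power2_eq_square algebra_simps\<close>)
  have "(g^2 + 1) div 2 = 2 * k^2 + 2 * k + 1" unfolding g by (simp add: power2_eq_square algebra_simps)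
  then show ?thesis using zrg_mixed_graph_circ by fastforce
next
  case False
  then obtain k where g: "g = 2 * k" by (auto elim: evenE)
  interpret mixed_circulant "2 * k^2" "2 * k - 1" g k
  proof
    fix a b :: int
    assume "0 \<le> b" "\<bar>a\<bar> + b < int g" "int (2 * k^2) dvd (a + b * int (2 * k - 1))"
    then show "a = 0 \<and> b = 0"
      using assms g by (intro no_short_relation_even[of "int k"]) (simp_all add: of_nat_diff)
  qed (use assms g in \<open>auto simp: power2_eq_square algebra_simps diff_mult_distrib2\<close>)
  have "(g^2 + 1) div 2 = 2 * k^2" unfolding g by (simp add: power2_eq_square algebra_simps)
  then show ?thesis using zrg_mixed_graph_circ by fastforce
qed

theorem theorem7:
  fixes g :: nat
  assumes "g \<ge> 3"
  defines "n \<equiv> (if odd g then (g^2 + 1) div 2 else g^2 div 2)"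
  shows "(\<exists>(V :: nat set) E A. zrg_mixed_graph V E A 1 2 g \<and> card V = n) \<and>
         (\<forall>(V :: 'a set) E A. zrg_mixed_graph V E A 1 2 g \<longrightarrow> n \<le> card V)"
proof -
  have "n = (g^2 + 1) div 2" unfolding n_def by (auto elim!: evenE)
  then show ?thesis
    using exists_mixed_12_graph[OF assms(1)] mixed_12_graph.card_ge_half_girth_square
    unfolding mixed_12_graph_def by auto
qed

end
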